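(* For any function $g=g(\mathbf{x}_p)\in C^1(\mathbb{R}^{p+1},\mathbb{A})$ (depending only on $\mathbf{x}_p$) and any $k\in\mathbb{N}$: $$D_{\mathbf{x}_p}(\underline{\mathbf{x}}_q^{2k}g)=\underline{\mathbf{x}}_q^{2k}(D_{\mathbf{x}_p}g),\qquad D_{\mathbf{x}_p}(\underline{\mathbf{x}}_q^{2k+1}g)=\underline{\mathbf{x}}_q^{2k+1}(\overline{D}_{\mathbf{x}_p}g),$$ $$D_{\underline{\mathbf{x}}_q}(\underline{\mathbf{x}}_q^{2k}g)=-2k\,\underline{\mathbf{x}}_q^{2k-1}g,\qquad D_{\underline{\mathbf{x}}_q}(\underline{\mathbf{x}}_q^{2k+1}g)=-(2k+q)\,\underline{\mathbf{x}}_q^{2k}g.$$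
   Context: Let $\mathbb{A}$ be a real alternative algebra (the associator $[a,b,c]=(ab)c-a(bc)$ is an alternating trilinear function) with unity $1$, of finite real dimension $d>1$, equipped with an anti-involution $a\mapsto a^c$ (real linear, $a^c=a$ for real $a$, $(a^c)^c=a$, $(ab)^c=b^ca^c$). Let $t(x)=x+x^c$, $n(x)=xx^c$, $\mathbb{S}_{\mathbb{A}}=\{x: t(x)=0,\ n(x)=1\}$ (assumed nonempty) and $Q_{\mathbb{A}}=\mathbb{R}\cup\{x: t(x)\in\mathbb{R},\ n(x)\in\mathbb{R},\ 4n(x)>t(x)^2\}$. Let $M$ be a real subspace with $\mathbb{R}\subsetneq M\subseteq Q_{\mathbb{A}}$ having a basis $(v_0,\dots,v_m)$, $m\ge1$, $v_0=1$, $v_s\in\mathbb{S}_{\mathbb{A}}$, $v_sv_t=-v_tv_s$ for distinct $s,t\ge1$. Identify $x=\sum x_sv_s\in M$ with $(x_0,\dots,x_m)\in\mathbb{R}^{m+1}$; differentiate componentwise. Fix $p\in\{0,\dots,m-1\}$, $q=m-p$; $\mathbf{x}=\mathbf{x}_p+\underline{\mathbf{x}}_q$ with $\mathbf{x}_p=\sum_{s=0}^px_sv_s\in\mathbb{R}^{p+1}$, $\underline{\mathbf{x}}_q=\sum_{s=p+1}^m x_sv_s$; powers $\underline{\mathbf{x}}_q^j$ are taken in $\mathbb{A}$ (the term with $k=0$ in the third identity is $0$). $D_{\mathbf{x}_p}f=\sum_{s=0}^p v_s\partial_{x_s}f$, $\overline{D}_{\mathbf{x}_p}f=\partial_{x_0}f-\sum_{s=1}^pv_s\partial_{x_s}f$,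 $D_{\underline{\mathbf{x}}_q}f=\sum_{s=p+1}^mv_s\partial_{x_s}f$ (all acting on the left). *)

theory Defs
  imports "HOL-Analysis.Analysis"
begin

text \<open>The algebra A is modelled as a finite-dimensional real vector space 'a (class euclidean_space,
which only serves to give the canonical finite-dimensional topology) together with an
explicit bilinear multiplication mul, unity one and anti-involution cj.\<close>

definition associator :: "('a::real_vector \<Rightarrow> 'a \<Rightarrow> 'a) \<Rightarrow> 'a \<Rightarrow> 'a \<Rightarrow> 'a \<Rightarrow> 'a" where
  "associator mul a b c = mul (mul a b) c - mul a (mul b c)"

definition reals_in :: "'a::real_vector \<Rightarrow> 'a set" where
  "reals_in one = range (\<lambda>r. r *\<^sub>R one)"

definition alternative_algebra :: "('a::real_vector \<Rightarrow> 'a \<Rightarrow> 'a) \<Rightarrow> 'a \<Rightarrow> bool" where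
  "alternative_algebra mul one \<longleftrightarrow>
     bilinear mul \<and> (\<forall>x. mul one x = x \<and> mul x one = x) \<and>
     (\<forall>a b. associator mul a a b = 0 \<and> associator mul a b a = 0 \<and> associator mul b a a = 0)"

definition anti_involution :: "('a::real_vector \<Rightarrow> 'a \<Rightarrow> 'a) \<Rightarrow> 'a \<Rightarrow> ('a \<Rightarrow> 'a) \<Rightarrow> bool" where
  "anti_involution mul one cj \<longleftrightarrow>
     linear cj \<and> (\<forall>a\<in>reals_in one. cj a = a) \<and> (\<forall>a. cj (cj a) = a) \<and>
     (\<forall>a b. cj (mul a b) = mul (cj b) (cj a))"

definition trA :: "('a::real_vector \<Rightarrow> 'a) \<Rightarrow> 'a \<Rightarrow> 'a" where
  "trA cj x = x + cj x"

definition nA :: "('a::real_vector \<Rightarrow> 'a \<Rightarrow> 'a) \<Rightarrow> ('a \<Rightarrow> 'a) \<Rightarrow> 'a \<Rightarrow> 'a" where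
  "nA mul cj x = mul x (cj x)"

definition SA :: "('a::real_vector \<Rightarrow> 'a \<Rightarrow> 'a) \<Rightarrow> 'a \<Rightarrow> ('a \<Rightarrow> 'a) \<Rightarrow> 'a set" where
  "SA mul one cj = {x. trA cj x = 0 \<and> nA mul cj x = one}"

definition QA :: "('a::real_vector \<Rightarrow> 'a \<Rightarrow> 'a) \<Rightarrow> 'a \<Rightarrow> ('a \<Rightarrow> 'a) \<Rightarrow> 'a set" where
  "QA mul one cj = reals_in one \<union>
     {x. \<exists>t n::real. trA cj x = t *\<^sub>R one \<and> nA mul cj x = n *\<^sub>R one \<and> 4 * n > t ^ 2}"

text \<open>Powers in A (left-nested; A is power-associative).\<close>
fun powA :: "('a \<Rightarrow> 'a \<Rightarrow> 'a) \<Rightarrow> 'a \<Rightarrow> 'a \<Rightarrow> nat \<Rightarrow> 'a" where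
  "powA mul one a 0 = one"
| "powA mul one a (Suc n) = mul a (powA mul one a n)"

text \<open>Points of R^(m+1) are coordinate functions x :: nat => real (only x 0..x m matter).
  Partial derivative with respect to the s-th coordinate.\<close>
definition partial :: "((nat \<Rightarrow> real) \<Rightarrow> 'a::real_normed_vector) \<Rightarrow> nat \<Rightarrow> (nat \<Rightarrow> real) \<Rightarrow> 'a" where
  "partial f s x = vector_derivative (\<lambda>t. f (x(s := t))) (at (x s))"

definition Dp :: "('a \<Rightarrow> 'a \<Rightarrow> 'a) \<Rightarrow> (nat \<Rightarrow> 'a) \<Rightarrow> nat \<Rightarrow> ((nat \<Rightarrow> real) \<Rightarrow> 'a::real_normed_vector)
     \<Rightarrow> (nat \<Rightarrow> real) \<Rightarrow> 'a" where
  "Dp mul v p f x = (\<Sum>s\<in>{0..p}. mul (v s) (partial f s x))"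

definition Dpbar :: "('a \<Rightarrow> 'a \<Rightarrow> 'a) \<Rightarrow> (nat \<Rightarrow> 'a) \<Rightarrow> nat \<Rightarrow> ((nat \<Rightarrow> real) \<Rightarrow> 'a::real_normed_vector)
     \<Rightarrow> (nat \<Rightarrow> real) \<Rightarrow> 'a" where
  "Dpbar mul v p f x = partial f 0 x - (\<Sum>s\<in>{1..p}. mul (v s) (partial f s x))"

definition Dq :: "('a \<Rightarrow> 'a \<Rightarrow> 'a) \<Rightarrow> (nat \<Rightarrow> 'a) \<Rightarrow> nat \<Rightarrow> nat \<Rightarrow> ((nat \<Rightarrow> real) \<Rightarrow> 'a::real_normed_vector)
     \<Rightarrow> (nat \<Rightarrow> real) \<Rightarrow> 'a" where
  "Dq mul v p m f x = (\<Sum>s\<in>{p+1..m}. mul (v s) (partial f s x))"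

definition xq :: "(nat \<Rightarrow> 'a::real_vector) \<Rightarrow> nat \<Rightarrow> nat \<Rightarrow> (nat \<Rightarrow> real) \<Rightarrow> 'a" where
  "xq v p m x = (\<Sum>s\<in>{p+1..m}. x s *\<^sub>R v s)"

definition depends_only_on_p :: "nat \<Rightarrow> ((nat \<Rightarrow> real) \<Rightarrow> 'a) \<Rightarrow> bool" where
  "depends_only_on_p p g \<longleftrightarrow> (\<forall>x y. (\<forall>s\<le>p. x s = y s) \<longrightarrow> g x = g y)"

text \<open>C^1 on R^(p+1): all partial derivatives in x_0..x_p exist everywhere and are continuous
  (for functions depending only on x_0..x_p the product topology on nat => real induces the
  usual topology of R^(p+1)).\<close>
definition C1_p :: "nat \<Rightarrow> ((nat \<Rightarrow> real) \<Rightarrow> 'a::real_normed_vector) \<Rightarrow> bool" where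
  "C1_p p g \<longleftrightarrow>
     (\<forall>s\<le>p. \<forall>x. (\<lambda>t. g (x(s := t))) differentiable (at (x s))) \<and>
     (\<forall>s\<le>p. continuous_on UNIV (partial g s))"

end

(* The frame relations v_s v_s = -1 and v_s v_t = -v_t v_s make x_q square to the real scalar
   -|x_q|^2, so x_q^(2k) = (-|x_q|^2)^k and x_q^(2k+1) = (-|x_q|^2)^k x_q.  Derivatives in
   x_0, ..., x_p do not see these factors; in the odd case x_q has to be moved past v_1, ..., v_p,
   and left alternativity turns v_s x_q = -x_q v_s into v_s (x_q h) = -x_q (v_s h), which flips D
   into its conjugate.  In a direction x_s with s > p, |x_q|^2 has derivative 2 x_s and x_q has
   derivative v_s; multiplying by v_s and summing, sum x_s v_s = x_q and sum v_s v_s = -q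
   produce the factors -2k and -(2k+q). *)

theory Submission
  imports Defs
begin

definition xq_sqnorm :: "nat \<Rightarrow> nat \<Rightarrow> (nat \<Rightarrow> real) \<Rightarrow> real" where
  "xq_sqnorm p m x = (\<Sum>s\<in>{p+1..m}. (x s)\<^sup>2)"

lemma partial_eqI:
  "((\<lambda>t. f (x(s := t))) has_vector_derivative f') (at (x s)) \<Longrightarrow> partial f s x = f'"
  unfolding partial_def by (rule vector_derivative_at)

lemma has_vector_derivative_sum_fun_upd:
  assumes "finite I" "s \<in> I" "(f s has_vector_derivative f') (at (x s))"
  shows "((\<lambda>t. \<Sum>j\<in>I. f j ((x(s := t)) j)) has_vector_derivative f') (at (x s))"
proof -
  have "((\<lambda>t. \<Sum>j\<in>I. f j ((x(s := t)) j)) has_vector_derivative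
      (\<Sum>j\<in>I. if j = s then f' else 0)) (at (x s))"
    by (rule has_vector_derivative_sum) (auto simp: assms(3))
  then show ?thesis
    using assms(1,2) by simp
qed

lemma xq_fun_upd_low: "s \<le> p \<Longrightarrow> xq v p m (x(s := t)) = xq v p m x"
  unfolding xq_def by (intro sum.cong) auto

lemma xq_line_derivative:
  "s \<in> {p+1..m} \<Longrightarrow> ((\<lambda>t. xq v p m (x(s := t))) has_vector_derivative v s) (at (x s))"
  unfolding xq_def by (rule has_vector_derivative_sum_fun_upd) (auto intro!: derivative_eq_intros)

lemma xq_sqnorm_line_derivative:
  "s \<in> {p+1..m} \<Longrightarrow> ((\<lambda>t. xq_sqnorm p m (x(s := t))) has_real_derivative 2 * x s) (at (x s))"
  unfolding has_real_derivative_iff_has_vector_derivative xq_sqnorm_def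
  by (rule has_vector_derivative_sum_fun_upd)
    (auto simp flip: has_real_derivative_iff_has_vector_derivative intro!: derivative_eq_intros)

lemma depends_only_on_p_fun_upd:
  "depends_only_on_p p g \<Longrightarrow> p < s \<Longrightarrow> g (x(s := t)) = g x"
  unfolding depends_only_on_p_def by auto

lemma alternative_algebra_left_alternative:
  "alternative_algebra mul one \<Longrightarrow> mul (mul a a) b = mul a (mul a b)"
  unfolding alternative_algebra_def associator_def by auto

lemma SA_square:
  assumes "bilinear mul" "a \<in> SA mul one cj"
  shows "mul a a = - one"
proof -
  from assms(2) have "cj a = - a" "mul a (cj a) = one"
    unfolding SA_def trA_def nA_def by (auto simp: eq_neg_iff_add_eq_0 add.commute)
  then show ?thesis
    by (metis bilinear_rneg[OF assms(1)] minus_minus)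
qed

context bounded_bilinear
begin

lemma partial_prod_line_const_left:
  assumes "\<And>t. c (x(s := t)) = c x" "(\<lambda>t. g (x(s := t))) differentiable (at (x s))"
  shows "partial (\<lambda>y. prod (c y) (g y)) s x = prod (c x) (partial g s x)"
proof (rule partial_eqI)
  have "((\<lambda>t. g (x(s := t))) has_vector_derivative partial g s x) (at (x s))"
    using assms(2) unfolding partial_def vector_derivative_works .
  then show "((\<lambda>t. prod (c (x(s := t))) (g (x(s := t)))) has_vector_derivative
      prod (c x) (partial g s x)) (at (x s))"
    unfolding assms(1) by (rule bounded_linear.has_vector_derivative[OF bounded_linear_right])
qed

lemma partial_prod_line_const_right:
  assumes "\<And>t. g (x(s := t)) = g x" "((\<lambda>t. c (x(s := t))) has_vector_derivative c') (at (x s))"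
  shows "partial (\<lambda>y. prod (c y) (g y)) s x = prod c' (g x)"
  by (rule partial_eqI)
    (simp add: assms(1) bounded_linear.has_vector_derivative[OF bounded_linear_left assms(2)])

end

locale left_alternative_algebra = bounded_bilinear mul
  for mul :: "'a::real_normed_vector \<Rightarrow> 'a \<Rightarrow> 'a" +
  fixes one :: 'a
  assumes mul_one_left: "mul one a = a"
    and mul_one_right: "mul a one = a"
    and left_alternative: "mul (mul a a) b = mul a (mul a b)"
begin

lemma mul_scaleR_one_left: "mul (c *\<^sub>R one) a = c *\<^sub>R a"
  by (simp add: scaleR_left mul_one_left)

lemma anticommuting_mul_left:
  assumes "mul a b = - mul b a"
  shows "mul a (mul b h) = - mul b (mul a h)"
proof -
  have "mul (mul (a + b) (a + b)) h = mul (a + b) (mul (a + b) h)"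
    by (rule left_alternative)
  then have "mul (mul a b + mul b a) h = mul a (mul b h) + mul b (mul a h)"
    by (simp add: add_left add_right left_alternative algebra_simps)
  with assms show ?thesis
    by (simp add: zero_left eq_neg_iff_add_eq_0)
qed

lemma square_scalar_mul_left:
  assumes "mul a a = c *\<^sub>R one"
  shows "mul a (mul a h) = c *\<^sub>R h"
  using left_alternative[of a h] by (simp add: assms mul_scaleR_one_left)

end

locale clifford_frame = left_alternative_algebra mul one
  for mul :: "'a::real_normed_vector \<Rightarrow> 'a \<Rightarrow> 'a" and one :: 'a +
  fixes v :: "nat \<Rightarrow> 'a" and p m :: nat
  assumes v0_one: "v 0 = one"
    and frame_square: "s \<in> {1..m} \<Longrightarrow> mul (v s) (v s) = - one"
    and frame_anticomm:
      "s \<in> {1..m} \<Longrightarrow> t \<in> {1..m} \<Longrightarrow> s \<noteq> t \<Longrightarrow> mul (v s) (v t) = - mul (v t) (v s)"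
begin

abbreviation X :: "(nat \<Rightarrow> real) \<Rightarrow> 'a" where
  "X \<equiv> xq v p m"

abbreviation N :: "(nat \<Rightarrow> real) \<Rightarrow> real" where
  "N \<equiv> xq_sqnorm p m"

lemma frame_anticomm_combination:
  assumes "s \<in> {1..m}" "I \<subseteq> {1..m}" "s \<notin> I"
  shows "mul (v s) (\<Sum>t\<in>I. y t *\<^sub>R v t) = - mul (\<Sum>t\<in>I. y t *\<^sub>R v t) (v s)"
proof -
  have "mul (v s) (y t *\<^sub>R v t) = - mul (y t *\<^sub>R v t) (v s)" if "t \<in> I" for t
  proof -
    have "t \<in> {1..m}" "s \<noteq> t"
      using assms that by auto
    with frame_anticomm[OF assms(1)] show ?thesis
      by (simp add: scaleR_left scaleR_right)
  qed
  then show ?thesis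
    by (simp add: sum_left sum_right sum_negf)
qed

lemma square_frame_combination:
  assumes "finite I" "I \<subseteq> {1..m}"
  shows "mul (\<Sum>s\<in>I. y s *\<^sub>R v s) (\<Sum>s\<in>I. y s *\<^sub>R v s) = - (\<Sum>s\<in>I. (y s)\<^sup>2) *\<^sub>R one"
  using assms
proof (induction I rule: finite_induct)
  case empty
  then show ?case by (simp add: zero_left)
next
  case (insert s I)
  define a where "a = (\<Sum>t\<in>I. y t *\<^sub>R v t)"
  have s: "s \<in> {1..m}" and I: "I \<subseteq> {1..m}"
    using insert.prems by auto
  have "mul (y s *\<^sub>R v s + a) (y s *\<^sub>R v s + a)
      = (y s)\<^sup>2 *\<^sub>R mul (v s) (v s) + y s *\<^sub>R (mul (v s) a + mul a (v s)) + mul a a"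
    by (simp add: add_left add_right scaleR_left scaleR_right power2_eq_square algebra_simps)
  also have "\<dots> = - ((y s)\<^sup>2 + (\<Sum>t\<in>I. (y t)\<^sup>2)) *\<^sub>R one"
    using frame_square[OF s] frame_anticomm_combination[OF s I insert.hyps(2)] insert.IH[OF I]
    by (simp add: a_def algebra_simps)
  finally show ?case
    using insert.hyps by (simp add: a_def)
qed

lemma xq_square: "mul (X y) (X y) = - N y *\<^sub>R one"
  unfolding xq_def xq_sqnorm_def by (rule square_frame_combination) auto

lemma frame_square_mul_left: "s \<in> {1..m} \<Longrightarrow> mul (v s) (mul (v s) h) = - h"
  using square_scalar_mul_left[of "v s" "- 1" h] frame_square by simp

lemma xq_square_mul_left: "mul (X y) (mul (X y) h) = - N y *\<^sub>R h"
  by (rule square_scalar_mul_left[OF xq_square])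

lemma frame_xq_anticomm_left:
  assumes "s \<in> {1..p}"
  shows "mul (v s) (mul (X y) h) = - mul (X y) (mul (v s) h)"
proof (rule anticommuting_mul_left)
  show "mul (v s) (X y) = - mul (X y) (v s)"
  proof (cases "p < m")
    case True
    with assms show ?thesis
      unfolding xq_def by (intro frame_anticomm_combination) auto
  qed (simp add: xq_def zero_left zero_right)
qed

lemma powA_xq:
  "powA mul one (X y) (2 * k) = (- N y) ^ k *\<^sub>R one"
  "powA mul one (X y) (2 * k + 1) = (- N y) ^ k *\<^sub>R X y"
proof (induction k)
  case 0
  show "powA mul one (X y) (2 * 0) = (- N y) ^ 0 *\<^sub>R one"
    and "powA mul one (X y) (2 * 0 + 1) = (- N y) ^ 0 *\<^sub>R X y"
    by (simp_all add: mul_one_right)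
next
  case (Suc k)
  have "powA mul one (X y) (2 * Suc k) = mul (X y) (mul (X y) (powA mul one (X y) (2 * k)))"
    by (simp add: numeral_2_eq_2)
  also have "\<dots> = (- N y) ^ Suc k *\<^sub>R one"
    by (simp add: xq_square_mul_left Suc.IH(1))
  finally show even: "powA mul one (X y) (2 * Suc k) = (- N y) ^ Suc k *\<^sub>R one" .
  show "powA mul one (X y) (2 * Suc k + 1) = (- N y) ^ Suc k *\<^sub>R X y"
    by (simp add: even [simplified] scaleR_right minus_right mul_one_right)
qed

lemma sum_scaleR_frame_mul: "(\<Sum>s\<in>{p+1..m}. y s *\<^sub>R mul (v s) h) = mul (X y) h"
  by (simp add: xq_def sum_left scaleR_left)

lemma partial_powA_xq_low:
  assumes "s \<le> p" "(\<lambda>t. g (x(s := t))) differentiable (at (x s))"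
  shows "partial (\<lambda>y. mul (powA mul one (X y) n) (g y)) s x = mul (powA mul one (X x) n) (partial g s x)"
  using assms by (intro partial_prod_line_const_left) (simp_all add: xq_fun_upd_low)

(* For k = 0 the exponent k - 1 truncates to 0; the factor real k makes this harmless. *)
lemma powA_xq_even_line_derivative:
  assumes "s \<in> {p+1..m}"
  shows "((\<lambda>t. powA mul one (X (x(s := t))) (2 * k)) has_vector_derivative
      (- 2 * x s * real k * (- N x) ^ (k - 1)) *\<^sub>R one) (at (x s))"
  unfolding powA_xq using xq_sqnorm_line_derivative[OF assms]
  by (auto intro!: derivative_eq_intros simp flip: has_real_derivative_iff_has_vector_derivative)

lemma powA_xq_odd_line_derivative:
  assumes "s \<in> {p+1..m}"
  shows "((\<lambda>t. powA mul one (X (x(s := t))) (2 * k + 1)) has_vector_derivative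
      (- N x) ^ k *\<^sub>R v s + (- 2 * x s * real k * (- N x) ^ (k - 1)) *\<^sub>R X x) (at (x s))"
  unfolding powA_xq using xq_sqnorm_line_derivative[OF assms] xq_line_derivative[OF assms]
  by (auto intro!: derivative_eq_intros simp flip: has_real_derivative_iff_has_vector_derivative)

lemma Dp_powA_xq_even:
  assumes "\<forall>s\<le>p. (\<lambda>t. g (x(s := t))) differentiable (at (x s))"
  shows "Dp mul v p (\<lambda>y. mul (powA mul one (X y) (2 * k)) (g y)) x
    = mul (powA mul one (X x) (2 * k)) (Dp mul v p g x)"
proof -
  have "Dp mul v p (\<lambda>y. mul (powA mul one (X y) (2 * k)) (g y)) x
      = (\<Sum>s\<in>{0..p}. mul (v s) (mul (powA mul one (X x) (2 * k)) (partial g s x)))"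
    unfolding Dp_def using assms by (intro sum.cong refl) (simp add: partial_powA_xq_low del: powA.simps)
  then show ?thesis
    by (simp add: Dp_def powA_xq mul_scaleR_one_left scaleR_right scaleR_sum_right)
qed

lemma Dp_powA_xq_odd:
  assumes "\<forall>s\<le>p. (\<lambda>t. g (x(s := t))) differentiable (at (x s))"
  shows "Dp mul v p (\<lambda>y. mul (powA mul one (X y) (2 * k + 1)) (g y)) x
    = mul (powA mul one (X x) (2 * k + 1)) (Dpbar mul v p g x)"
proof -
  let ?P = "powA mul one (X x) (2 * k + 1)"
  have "Dp mul v p (\<lambda>y. mul (powA mul one (X y) (2 * k + 1)) (g y)) x
      = (\<Sum>s\<in>{0..p}. mul (v s) (mul ?P (partial g s x)))"
    unfolding Dp_def using assms by (intro sum.cong refl) (simp add: partial_powA_xq_low del: powA.simps)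
  also have "\<dots> = mul ?P (partial g 0 x) + (\<Sum>s\<in>{1..p}. mul (v s) (mul ?P (partial g s x)))"
    by (simp add: sum.atLeast_Suc_atMost v0_one mul_one_left)
  also have "(\<Sum>s\<in>{1..p}. mul (v s) (mul ?P (partial g s x)))
      = - (\<Sum>s\<in>{1..p}. mul ?P (mul (v s) (partial g s x)))"
    unfolding sum_negf[symmetric]
    by (intro sum.cong refl) (simp add: powA_xq scaleR_left scaleR_right mul_one_right frame_xq_anticomm_left)
  finally show ?thesis
    by (simp add: Dpbar_def diff_right sum_right)
qed

lemma partial_powA_xq_high:
  assumes s: "s \<in> {p+1..m}" and g: "depends_only_on_p p g"
  shows "partial (\<lambda>y. mul (powA mul one (X y) (2 * k)) (g y)) s x
      = (- 2 * x s * real k * (- N x) ^ (k - 1)) *\<^sub>R g x"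
    and "partial (\<lambda>y. mul (powA mul one (X y) (2 * k + 1)) (g y)) s x
      = (- N x) ^ k *\<^sub>R mul (v s) (g x) + (- 2 * x s * real k * (- N x) ^ (k - 1)) *\<^sub>R mul (X x) (g x)"
proof -
  have g_const: "g (x(s := t)) = g x" for t
    using s by (intro depends_only_on_p_fun_upd[OF g]) auto
  show "partial (\<lambda>y. mul (powA mul one (X y) (2 * k)) (g y)) s x
      = (- 2 * x s * real k * (- N x) ^ (k - 1)) *\<^sub>R g x"
    using partial_prod_line_const_right[OF g_const powA_xq_even_line_derivative[OF s, where k = k]]
    by (simp only: mul_scaleR_one_left)
  show "partial (\<lambda>y. mul (powA mul one (X y) (2 * k + 1)) (g y)) s x
      = (- N x) ^ k *\<^sub>R mul (v s) (g x) + (- 2 * x s * real k * (- N x) ^ (k - 1)) *\<^sub>R mul (X x) (g x)"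
    using partial_prod_line_const_right[OF g_const powA_xq_odd_line_derivative[OF s, where k = k]]
    by (simp only: add_left scaleR_left)
qed

lemma Dq_powA_xq_even:
  assumes "depends_only_on_p p g"
  shows "Dq mul v p m (\<lambda>y. mul (powA mul one (X y) (2 * k)) (g y)) x
    = - real (2 * k) *\<^sub>R mul (powA mul one (X x) (2 * k - 1)) (g x)"
proof -
  let ?c = "- 2 * real k * (- N x) ^ (k - 1)"
  have "Dq mul v p m (\<lambda>y. mul (powA mul one (X y) (2 * k)) (g y)) x
      = ?c *\<^sub>R (\<Sum>s\<in>{p+1..m}. x s *\<^sub>R mul (v s) (g x))"
    unfolding Dq_def scaleR_sum_right
  proof (intro sum.cong refl)
    fix s assume s: "s \<in> {p+1..m}"
    show "mul (v s) (partial (\<lambda>y. mul (powA mul one (X y) (2 * k)) (g y)) s x)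
        = ?c *\<^sub>R (x s *\<^sub>R mul (v s) (g x))"
      unfolding partial_powA_xq_high(1)[OF s assms] by (simp add: scaleR_right minus_right mult_ac)
  qed
  also have "\<dots> = ?c *\<^sub>R mul (X x) (g x)"
    by (simp only: sum_scaleR_frame_mul)
  also have "\<dots> = - real (2 * k) *\<^sub>R mul (powA mul one (X x) (2 * k - 1)) (g x)"
  proof (cases k)
    case (Suc j)
    then have "powA mul one (X x) (2 * k - 1) = (- N x) ^ j *\<^sub>R X x"
      using powA_xq(2)[of x j] by simp
    with Suc show ?thesis
      by (simp add: scaleR_left)
  qed simp
  finally show ?thesis .
qed

lemma Dq_powA_xq_odd:
  assumes "depends_only_on_p p g"
  shows "Dq mul v p m (\<lambda>y. mul (powA mul one (X y) (2 * k + 1)) (g y)) x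
    = - real (2 * k + (m - p)) *\<^sub>R mul (powA mul one (X x) (2 * k)) (g x)"
proof -
  let ?c = "- 2 * real k * (- N x) ^ (k - 1)"
  have "Dq mul v p m (\<lambda>y. mul (powA mul one (X y) (2 * k + 1)) (g y)) x
      = (\<Sum>s\<in>{p+1..m}. - ((- N x) ^ k *\<^sub>R g x) + ?c *\<^sub>R (x s *\<^sub>R mul (v s) (mul (X x) (g x))))"
    unfolding Dq_def
  proof (intro sum.cong refl)
    fix s assume s: "s \<in> {p+1..m}"
    then have "s \<in> {1..m}"
      by simp
    show "mul (v s) (partial (\<lambda>y. mul (powA mul one (X y) (2 * k + 1)) (g y)) s x)
        = - ((- N x) ^ k *\<^sub>R g x) + ?c *\<^sub>R (x s *\<^sub>R mul (v s) (mul (X x) (g x)))"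
      unfolding partial_powA_xq_high(2)[OF s assms]
      by (simp add: add_right diff_right minus_right scaleR_right
          frame_square_mul_left[OF \<open>s \<in> {1..m}\<close>] mult_ac)
  qed
  also have "\<dots> = - (real (m - p) * (- N x) ^ k) *\<^sub>R g x
        + ?c *\<^sub>R (\<Sum>s\<in>{p+1..m}. x s *\<^sub>R mul (v s) (mul (X x) (g x)))"
    by (simp only: sum.distrib) (simp add: scaleR_sum_right sum_negf sum_constant_scaleR)
  also have "?c *\<^sub>R (\<Sum>s\<in>{p+1..m}. x s *\<^sub>R mul (v s) (mul (X x) (g x)))
      = (- 2 * real k * (- N x) ^ k) *\<^sub>R g x"
  proof -
    have "?c * - N x = - 2 * real k * (- N x) ^ k"
      by (cases k) simp_all
    then show ?thesis
      by (simp only: sum_scaleR_frame_mul xq_square_mul_left scaleR_scaleR)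
  qed
  also have "- (real (m - p) * (- N x) ^ k) *\<^sub>R g x + (- 2 * real k * (- N x) ^ k) *\<^sub>R g x
      = - real (2 * k + (m - p)) *\<^sub>R ((- N x) ^ k *\<^sub>R g x)"
    unfolding scaleR_scaleR scaleR_add_left[symmetric]
    by (rule arg_cong[where f = "\<lambda>r. r *\<^sub>R g x"]) (simp add: algebra_simps)
  also have "(- N x) ^ k *\<^sub>R g x = mul (powA mul one (X x) (2 * k)) (g x)"
    by (simp only: powA_xq mul_scaleR_one_left)
  finally show ?thesis .
qed

end

theorem lemma3p8:
  fixes mul :: "'a::euclidean_space \<Rightarrow> 'a \<Rightarrow> 'a" and one :: 'a and cj :: "'a \<Rightarrow> 'a"
    and v :: "nat \<Rightarrow> 'a" and m p k :: nat and g :: "(nat \<Rightarrow> real) \<Rightarrow> 'a"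
  assumes alg: "alternative_algebra mul one"
    and dim: "DIM('a) > 1"
    and inv: "anti_involution mul one cj"
    and S_ne: "SA mul one cj \<noteq> {}"
    and m1: "m \<ge> 1"
    and v_inj: "inj_on v {0..m}"
    and v_indep: "independent (v ` {0..m})"
    and v0: "v 0 = one"
    and vS: "\<forall>s\<in>{1..m}. v s \<in> SA mul one cj"
    and v_anti: "\<forall>s\<in>{1..m}. \<forall>t\<in>{1..m}. s \<noteq> t \<longrightarrow> mul (v s) (v t) = - mul (v t) (v s)"
    and M_Q: "span (v ` {0..m}) \<subseteq> QA mul one cj"
    and p_lt: "p < m"
    and g_dep: "depends_only_on_p p g"
    and g_C1: "C1_p p g"
  shows "(\<forall>x. Dp mul v p (\<lambda>y. mul (powA mul one (xq v p m y) (2*k)) (g y)) x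
              = mul (powA mul one (xq v p m x) (2*k)) (Dp mul v p g x))
       \<and> (\<forall>x. Dp mul v p (\<lambda>y. mul (powA mul one (xq v p m y) (2*k+1)) (g y)) x
              = mul (powA mul one (xq v p m x) (2*k+1)) (Dpbar mul v p g x))
       \<and> (\<forall>x. Dq mul v p m (\<lambda>y. mul (powA mul one (xq v p m y) (2*k)) (g y)) x
              = - (real (2*k)) *\<^sub>R mul (powA mul one (xq v p m x) (2*k - 1)) (g x))
       \<and> (\<forall>x. Dq mul v p m (\<lambda>y. mul (powA mul one (xq v p m y) (2*k+1)) (g y)) x
              = - (real (2*k + (m - p))) *\<^sub>R mul (powA mul one (xq v p m x) (2*k)) (g x))"
proof -
  \<comment> \<open>Of the hypotheses on the algebra and the frame only alternativity, v 0 = 1 and the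
    relations among v 1, ..., v m are used; the others describe the setting of the paper.\<close>
  have bl: "bilinear mul"
    using alg unfolding alternative_algebra_def by blast
  interpret clifford_frame mul one v p m
  proof (intro clifford_frame.intro left_alternative_algebra.intro
      left_alternative_algebra_axioms.intro clifford_frame_axioms.intro)
    show "bounded_bilinear mul"
      using bl by (simp add: bilinear_conv_bounded_bilinear)
    show "mul one a = a" "mul a one = a" for a
      using alg unfolding alternative_algebra_def by auto
    show "mul (mul a a) b = mul a (mul a b)" for a b
      using alg by (rule alternative_algebra_left_alternative)
    show "s \<in> {1..m} \<Longrightarrow> mul (v s) (v s) = - one" for s
      using vS SA_square[OF bl] by blast
    show "s \<in> {1..m} \<Longrightarrow> t \<in> {1..m} \<Longrightarrow> s \<noteq> t \<Longrightarrow> mul (v s) (v t) = - mul (v t) (v s)"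
      for s t using v_anti by blast
  qed (rule v0)
  have "\<forall>s\<le>p. (\<lambda>t. g (x(s := t))) differentiable (at (x s))" for x
    using g_C1 unfolding C1_p_def by blast
  then show ?thesis
    using Dp_powA_xq_even Dp_powA_xq_odd Dq_powA_xq_even[OF g_dep] Dq_powA_xq_odd[OF g_dep]
    by blast
qed

end
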